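(* Let $a_1<a_2$ and $b_1<b_2$ be real numbers, and for $i=1,2$ let $R_i$ be the open line segment from $(-1,2a_i,a_i)$ to $(1,-2b_i,b_i)$ in $\mathbb{H}$. Then there is no horizontal line that contains both a point of $R_1$ and a point of $R_2$.
   Context: $\mathbb{H}$ is $\mathbb{R}^3$ with product $(x,y,z)\cdot(x',y',z')=(x+x',y+y',z+z'+\frac{xy'-yx'}{2})$. A horizontal line is a set $\{p\cdot tv:t\in\mathbb{R}\}$ with $p\in\mathbb{H}$ and $v=(a,b,0)\neq0$. *)

theory Defs
  imports Complex_Main
begin

type_synonym heis = "real \<times> real \<times> real"

definition hmult :: "heis \<Rightarrow> heis \<Rightarrow> heis" where
  "hmult p q = (case p of (x, y, z) \<Rightarrow> case q of (x', y', z') \<Rightarrow>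
     (x + x', y + y', z + z' + (x * y' - y * x') / 2))"

definition horizontal_line :: "heis set \<Rightarrow> bool" where
  "horizontal_line L \<longleftrightarrow> (\<exists>p a b. (a, b) \<noteq> (0, 0) \<and>
      L = {hmult p (t * a, t * b, 0) | t. True})"

definition open_seg :: "heis \<Rightarrow> heis \<Rightarrow> heis set" where
  "open_seg P Q = {(case P of (x, y, z) \<Rightarrow> case Q of (x', y', z') \<Rightarrow>
      ((1 - s) * x + s * x', (1 - s) * y + s * y', (1 - s) * z + s * z')) | s. 0 < s \<and> s < 1}"

end

theory Submission
  imports Defs
begin

text \<open>Between two points of a horizontal line the height z changes by the signed
  area (x y' - y x') / 2 of the triangle spanned by the origin and the projections of the
  two points to the xy-plane. For a point of R1 with segment parameter s and a point of R2
  with parameter r, the actual height change exceeds this area by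
  2((1 - r)(1 - s)(a2 - a1) + rs(b2 - b1)), which is positive.\<close>

lemma horizontal_line_height_diff:
  assumes "horizontal_line L" and "(x, y, z) \<in> L" and "(x', y', z') \<in> L"
  shows "z' - z = (x * y' - y * x') / 2"
proof -
  obtain p a b where L: "L = {hmult p (t * a, t * b, 0) | t. True}"
    using assms(1) unfolding horizontal_line_def by blast
  obtain t t' where
    P: "(x, y, z) = hmult p (t * a, t * b, 0)" and
    Q: "(x', y', z') = hmult p (t' * a, t' * b, 0)"
    using assms(2,3) unfolding L by blast
  obtain p1 p2 p3 where p: "p = (p1, p2, p3)" by (cases p) auto
  from P Q show ?thesis
    by (simp add: hmult_def p) (simp add: field_simps)
qed

lemma mem_open_seg_iff:
  "(x, y, z) \<in> open_seg (x0, y0, z0) (x1, y1, z1) \<longleftrightarrow>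
     (\<exists>s. 0 < s \<and> s < 1 \<and> x = (1 - s) * x0 + s * x1 \<and>
          y = (1 - s) * y0 + s * y1 \<and> z = (1 - s) * z0 + s * z1)"
  unfolding open_seg_def by auto

lemma segment_points_height_defect:
  fixes a1 a2 b1 b2 s r :: real
  defines "x \<equiv> 2 * s - 1" and "y \<equiv> (1 - s) * (2 * a1) - s * (2 * b1)"
    and "z \<equiv> (1 - s) * a1 + s * b1"
    and "x' \<equiv> 2 * r - 1" and "y' \<equiv> (1 - r) * (2 * a2) - r * (2 * b2)"
    and "z' \<equiv> (1 - r) * a2 + r * b2"
  shows "z' - z - (x * y' - y * x') / 2
           = 2 * ((1 - r) * (1 - s) * (a2 - a1) + r * s * (b2 - b1))"
  unfolding assms by (simp add: field_simps)

theorem lemma6p1: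
  fixes a1 a2 b1 b2 :: real
  assumes "a1 < a2" and "b1 < b2"
  shows "\<not> (\<exists>L. horizontal_line L
              \<and> L \<inter> open_seg (-1, 2 * a1, a1) (1, -2 * b1, b1) \<noteq> {}
              \<and> L \<inter> open_seg (-1, 2 * a2, a2) (1, -2 * b2, b2) \<noteq> {})"
proof
  assume "\<exists>L. horizontal_line L
              \<and> L \<inter> open_seg (-1, 2 * a1, a1) (1, -2 * b1, b1) \<noteq> {}
              \<and> L \<inter> open_seg (-1, 2 * a2, a2) (1, -2 * b2, b2) \<noteq> {}"
  then obtain L where L: "horizontal_line L"
    and R1: "L \<inter> open_seg (-1, 2 * a1, a1) (1, -2 * b1, b1) \<noteq> {}"
    and R2: "L \<inter> open_seg (-1, 2 * a2, a2) (1, -2 * b2, b2) \<noteq> {}"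
    by blast
  from R1 obtain x y z
    where P: "(x, y, z) \<in> L" "(x, y, z) \<in> open_seg (-1, 2 * a1, a1) (1, -2 * b1, b1)"
    by auto
  from R2 obtain x' y' z'
    where Q: "(x', y', z') \<in> L" "(x', y', z') \<in> open_seg (-1, 2 * a2, a2) (1, -2 * b2, b2)"
    by auto
  obtain s where s: "0 < s" "s < 1" and P_coords:
    "x = 2 * s - 1" "y = (1 - s) * (2 * a1) - s * (2 * b1)" "z = (1 - s) * a1 + s * b1"
    using P(2) unfolding mem_open_seg_iff by (auto simp: algebra_simps)
  obtain r where r: "0 < r" "r < 1" and Q_coords:
    "x' = 2 * r - 1" "y' = (1 - r) * (2 * a2) - r * (2 * b2)" "z' = (1 - r) * a2 + r * b2"
    using Q(2) unfolding mem_open_seg_iff by (auto simp: algebra_simps)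
  have "z' - z - (x * y' - y * x') / 2
          = 2 * ((1 - r) * (1 - s) * (a2 - a1) + r * s * (b2 - b1))"
    using segment_points_height_defect P_coords Q_coords by simp
  also have "\<dots> > 0"
    using assms s r by (simp add: add_pos_pos)
  finally show False
    using horizontal_line_height_diff[OF L P(1) Q(1)] by simp
qed

end
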